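(* Let $K$, $M=\begin{pmatrix}\alpha&\beta\\ \overline{\beta}&\gamma\end{pmatrix}$, $Q$, $\Delta$, $\varepsilon$ be as in the context, let $\lambda\in\mathbb{Q}_{>0}$ and let $\delta\in K$ with $|\delta|^2=\Delta$. Define $F:K^2\times K^2\to L^2$ by \[F\big((x,y)^T,(w,z)^T\big):=\big(\overline{z}+\overline{y}\sqrt{\varepsilon}\,j,\ -w+\overline{x}\sqrt{\varepsilon}\,j\big).\] Then $F$ restricts to a bijection between $\mathcal{B}_Q(\delta,\lambda)$ and $\mathcal{F}_{\alpha\lambda/\Delta}\!\left(\tfrac{\lambda}{\Delta}(\beta+\delta\sqrt{\varepsilon}\,j)\right)$.
   Context: $K$ is $\mathbb{Q}$ or an imaginary quadratic field, viewed inside $\mathbb{C}$, and $\mathbb{C}$ is identified with $\mathbb{R}+\mathbb{R}i$ inside the Hamilton quaternions $\mathbb{H}=\{a+bi+cj+dk\}$ (so $sj=j\overline{s}$ for $s\in K$). $M\in K^{2\times2}$ is positive definite hermitian, $Q(v)=v^*Mv$. A rational number is an absolute square in $K$ if it equals $|y|^2$ for some $y\in K$; write $\mu=\det M=\Delta\varepsilon$ with $\Delta\in\mathbb{Q}$ an absolute square in $K$ and $\varepsilon$ a positive integer whose only positive divisor that is an absolute square in $K$ is $1$. A pair $(a_1,a_2)\in K^2\times K^2$ is a $Q$-orthobalanced basis of norm $\lambda$ if $A^*MA=\lambda\,\mathrm{diag}(1,\varepsilon)$ for $A=(a_1|a_2)$; it is of type $\delta$ if $a_2=(Ma_1)_\perp/\delta$,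 where $(x,y)^T_\perp:=(-\overline{y},\overline{x})^T$. $\mathcal{B}_Q(\delta,\lambda)$ is the set of $Q$-orthobalanced bases of norm $\lambda$ and type $\delta$. $L:=\{r+s\sqrt{\varepsilon}\,j: r,s\in K\}\subseteq\mathbb{H}$, and for $t\in L$, $\nu\in\mathbb{Q}$: $\mathcal{F}_\nu(t):=\{(u,v)\in L^2: t=uv,\ |u|^2=\nu\}$, where $|\cdot|$ is the quaternion norm. *)

theory Defs
  imports Complex_Main
begin

definition Q_or_imag_quad :: "complex set \<Rightarrow> bool" where
  "Q_or_imag_quad K \<longleftrightarrow>
     K = {complex_of_real (of_rat a) | a. True} \<or>
     (\<exists>d::nat. d > 0 \<and>
        K = {complex_of_real (of_rat a) + complex_of_real (of_rat b) * (\<i> * complex_of_real (sqrt (real d)))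
             | a b. True})"

definition abs_square :: "complex set \<Rightarrow> real \<Rightarrow> bool" where
  "abs_square K q \<longleftrightarrow> (\<exists>y\<in>K. q = (cmod y)^2)"

text \<open>Vectors of K^2 are pairs (x,y); M = ((alpha, beta), (cnj beta, gamma)).
  herm_form alpha beta gamma u v = u^* M v.\<close>
definition herm_form :: "real \<Rightarrow> complex \<Rightarrow> real \<Rightarrow> complex \<times> complex \<Rightarrow> complex \<times> complex \<Rightarrow> complex" where
  "herm_form \<alpha> \<beta> \<gamma> u v =
     cnj (fst u) * (complex_of_real \<alpha> * fst v + \<beta> * snd v)
   + cnj (snd u) * (cnj \<beta> * fst v + complex_of_real \<gamma> * snd v)"

definition Qform :: "real \<Rightarrow> complex \<Rightarrow> real \<Rightarrow> complex \<times> complex \<Rightarrow> complex" where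
  "Qform \<alpha> \<beta> \<gamma> v = herm_form \<alpha> \<beta> \<gamma> v v"

definition Mvec :: "real \<Rightarrow> complex \<Rightarrow> real \<Rightarrow> complex \<times> complex \<Rightarrow> complex \<times> complex" where
  "Mvec \<alpha> \<beta> \<gamma> v = (complex_of_real \<alpha> * fst v + \<beta> * snd v, cnj \<beta> * fst v + complex_of_real \<gamma> * snd v)"

definition perp :: "complex \<times> complex \<Rightarrow> complex \<times> complex" where
  "perp v = (- cnj (snd v), cnj (fst v))"

definition pos_def :: "real \<Rightarrow> complex \<Rightarrow> real \<Rightarrow> bool" where
  "pos_def \<alpha> \<beta> \<gamma> \<longleftrightarrow> (\<forall>v. v \<noteq> (0,0) \<longrightarrow> Re (Qform \<alpha> \<beta> \<gamma> v) > 0)"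

definition detM :: "real \<Rightarrow> complex \<Rightarrow> real \<Rightarrow> real" where
  "detM \<alpha> \<beta> \<gamma> = \<alpha> * \<gamma> - (cmod \<beta>)^2"

definition orthobalanced ::
  "complex set \<Rightarrow> real \<Rightarrow> complex \<Rightarrow> real \<Rightarrow> nat \<Rightarrow> real \<Rightarrow> (complex \<times> complex) \<Rightarrow> (complex \<times> complex) \<Rightarrow> bool" where
  "orthobalanced K \<alpha> \<beta> \<gamma> \<epsilon> lam a1 a2 \<longleftrightarrow>
     fst a1 \<in> K \<and> snd a1 \<in> K \<and> fst a2 \<in> K \<and> snd a2 \<in> K \<and>
     herm_form \<alpha> \<beta> \<gamma> a1 a1 = complex_of_real lam \<and>
     herm_form \<alpha> \<beta> \<gamma> a1 a2 = 0 \<and>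
     herm_form \<alpha> \<beta> \<gamma> a2 a1 = 0 \<and>
     herm_form \<alpha> \<beta> \<gamma> a2 a2 = complex_of_real (lam * real \<epsilon>)"

definition BQ ::
  "complex set \<Rightarrow> real \<Rightarrow> complex \<Rightarrow> real \<Rightarrow> nat \<Rightarrow> complex \<Rightarrow> real \<Rightarrow> ((complex \<times> complex) \<times> (complex \<times> complex)) set" where
  "BQ K \<alpha> \<beta> \<gamma> \<epsilon> \<delta> lam =
     {(a1, a2). orthobalanced K \<alpha> \<beta> \<gamma> \<epsilon> lam a1 a2 \<and>
                a2 = (fst (perp (Mvec \<alpha> \<beta> \<gamma> a1)) / \<delta>, snd (perp (Mvec \<alpha> \<beta> \<gamma> a1)) / \<delta>)}"

text \<open>A Hamilton quaternion is encoded as a pair (p, q) of complex numbers standing for p + q j,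
  where C = R + R i inside H; since s j = j (cnj s), we get
  (a + b j)(c + d j) = (a c - b cnj d) + (a d + b cnj c) j.\<close>
type_synonym quat = "complex \<times> complex"

definition qmult :: "quat \<Rightarrow> quat \<Rightarrow> quat" where
  "qmult u v = (fst u * fst v - snd u * cnj (snd v), fst u * snd v + snd u * cnj (fst v))"

definition qnorm2 :: "quat \<Rightarrow> real" where
  "qnorm2 u = (cmod (fst u))^2 + (cmod (snd u))^2"

definition Lset :: "complex set \<Rightarrow> nat \<Rightarrow> quat set" where
  "Lset K \<epsilon> = {(r, s * complex_of_real (sqrt (real \<epsilon>))) | r s. r \<in> K \<and> s \<in> K}"

definition Fnu :: "complex set \<Rightarrow> nat \<Rightarrow> real \<Rightarrow> quat \<Rightarrow> (quat \<times> quat) set" where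
  "Fnu K \<epsilon> \<nu> t = {(u, v). u \<in> Lset K \<epsilon> \<and> v \<in> Lset K \<epsilon> \<and> t = qmult u v \<and> qnorm2 u = \<nu>}"

definition Fmap :: "nat \<Rightarrow> (complex \<times> complex) \<times> (complex \<times> complex) \<Rightarrow> quat \<times> quat" where
  "Fmap \<epsilon> p = (case p of ((x, y), (w, z)) \<Rightarrow>
     ((cnj z, cnj y * complex_of_real (sqrt (real \<epsilon>))),
      (- w, cnj x * complex_of_real (sqrt (real \<epsilon>)))))"

end

(*
  The type-delta condition fixes a_2 = (M a_1)_perp / delta, and for this a_2
  the orthobalanced conditions collapse to Q(a_1) = lambda: always v^* M (M v)_perp = 0, while
  (M v)_perp^* M (M v)_perp = det M * Q(v) = Delta * eps * Q(v).  Computing F(a_1, a_2) = (u, v)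
  with det M = Delta * eps gives |u|^2 = alpha Q(a_1) / Delta and u v = Q(a_1)/Delta (beta + delta sqrt(eps) j),
  so F maps B_Q(delta, lambda) into F_nu(t).  Conversely u alone determines a_1 (solve a linear system,
  using alpha, delta nonzero), the norm condition forces Q(a_1) = lambda, and v is recovered from t = u v
  by cancelling u, since |u|^2 is nonzero.  Injectivity of F is clear because sqrt(eps) is nonzero.
*)

theory Submission
  imports Defs
begin

locale cnj_field_closed =
  fixes K :: "complex set"
  assumes add_mem: "x \<in> K \<Longrightarrow> y \<in> K \<Longrightarrow> x + y \<in> K"
    and uminus_mem: "x \<in> K \<Longrightarrow> - x \<in> K"
    and mult_mem: "x \<in> K \<Longrightarrow> y \<in> K \<Longrightarrow> x * y \<in> K"
    and inverse_mem: "x \<in> K \<Longrightarrow> inverse x \<in> K"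
    and cnj_mem: "x \<in> K \<Longrightarrow> cnj x \<in> K"
begin

lemma diff_mem: "x \<in> K \<Longrightarrow> y \<in> K \<Longrightarrow> x - y \<in> K"
  using add_mem[of x "- y"] uminus_mem[of y] by simp

lemma divide_mem: "x \<in> K \<Longrightarrow> y \<in> K \<Longrightarrow> x / y \<in> K"
  by (simp add: divide_inverse mult_mem inverse_mem)

end

text \<open>For \<open>d = 0\<close> this is \<open>\<rat>\<close>, so both alternatives of \<open>Q_or_imag_quad\<close> are instances.\<close>
definition quad_field :: "nat \<Rightarrow> complex set" where
  "quad_field d = {complex_of_real (of_rat a) + complex_of_real (of_rat b) * (\<i> * complex_of_real (sqrt (real d)))
                   | a b. True}"

lemma Q_or_imag_quad_imp_quad_field:
  assumes "Q_or_imag_quad K"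
  shows "\<exists>d. K = quad_field d"
proof -
  have "quad_field 0 = {complex_of_real (of_rat a) | a. True}"
    unfolding quad_field_def by simp
  then show ?thesis
    using assms unfolding Q_or_imag_quad_def quad_field_def by metis
qed

lemma mem_quad_field_iff:
  "z \<in> quad_field d \<longleftrightarrow> (\<exists>a b. Re z = of_rat a \<and> Im z = of_rat b * sqrt (real d))"
  unfolding quad_field_def by (auto simp: complex_eq_iff)

lemma cnj_field_closed_quad_field: "cnj_field_closed (quad_field d)"
proof
  fix z w assume "z \<in> quad_field d" "w \<in> quad_field d"
  then obtain a b c e where z: "Re z = of_rat a" "Im z = of_rat b * sqrt (real d)"
    and w: "Re w = of_rat c" "Im w = of_rat e * sqrt (real d)"
    unfolding mem_quad_field_iff by blast
  show "z + w \<in> quad_field d"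
    unfolding mem_quad_field_iff
    by (rule exI[of _ "a + c"], rule exI[of _ "b + e"]) (simp add: z w of_rat_add algebra_simps)
  show "z * w \<in> quad_field d"
    unfolding mem_quad_field_iff
    by (rule exI[of _ "a * c - of_nat d * b * e"], rule exI[of _ "a * e + b * c"])
      (simp add: z w of_rat_add of_rat_diff of_rat_mult algebra_simps)
next
  fix z assume "z \<in> quad_field d"
  then obtain a b where z: "Re z = of_rat a" "Im z = of_rat b * sqrt (real d)"
    unfolding mem_quad_field_iff by blast
  define N where "N = a * a + of_nat d * b * b"
  have N: "(of_rat a)\<^sup>2 + (of_rat b * sqrt (real d))\<^sup>2 = of_rat N"
    by (simp add: z N_def of_rat_add of_rat_mult power2_eq_square algebra_simps)
  show "- z \<in> quad_field d"
    unfolding mem_quad_field_iff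
    by (rule exI[of _ "- a"], rule exI[of _ "- b"]) (simp add: z of_rat_minus)
  show "cnj z \<in> quad_field d"
    unfolding mem_quad_field_iff
    by (rule exI[of _ a], rule exI[of _ "- b"]) (simp add: z of_rat_minus)
  show "inverse z \<in> quad_field d"
    unfolding mem_quad_field_iff
    by (rule exI[of _ "a / N"], rule exI[of _ "- b / N"]) (simp add: z N of_rat_minus of_rat_divide)
qed

lemma Q_or_imag_quad_cnj_field_closed: "Q_or_imag_quad K \<Longrightarrow> cnj_field_closed K"
  using Q_or_imag_quad_imp_quad_field cnj_field_closed_quad_field by blast

lemma pos_def_alpha_pos:
  assumes "pos_def \<alpha> \<beta> \<gamma>"
  shows "\<alpha> > 0"
proof -
  have "Re (Qform \<alpha> \<beta> \<gamma> (1, 0)) > 0"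
    using assms unfolding pos_def_def by simp
  then show ?thesis
    by (simp add: Qform_def herm_form_def)
qed

lemma pos_def_detM_pos:
  assumes "pos_def \<alpha> \<beta> \<gamma>"
  shows "detM \<alpha> \<beta> \<gamma> > 0"
proof -
  have \<alpha>: "\<alpha> > 0"
    using assms by (rule pos_def_alpha_pos)
  have "Qform \<alpha> \<beta> \<gamma> (- \<beta>, complex_of_real \<alpha>) = complex_of_real (\<alpha> * detM \<alpha> \<beta> \<gamma>)"
    by (simp add: Qform_def herm_form_def detM_def complex_norm_square[unfolded of_real_power]
        algebra_simps)
  moreover have "Re (Qform \<alpha> \<beta> \<gamma> (- \<beta>, complex_of_real \<alpha>)) > 0"
    using assms \<alpha> unfolding pos_def_def by simp
  ultimately show ?thesis
    using \<alpha> by (simp add: zero_less_mult_iff)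
qed

definition companion :: "real \<Rightarrow> complex \<Rightarrow> real \<Rightarrow> complex \<Rightarrow> complex \<times> complex \<Rightarrow> complex \<times> complex" where
  "companion \<alpha> \<beta> \<gamma> \<delta> v = (fst (perp (Mvec \<alpha> \<beta> \<gamma> v)) / \<delta>, snd (perp (Mvec \<alpha> \<beta> \<gamma> v)) / \<delta>)"

lemma companion_Pair:
  "companion \<alpha> \<beta> \<gamma> \<delta> (x, y) =
     (- (\<beta> * cnj x + complex_of_real \<gamma> * cnj y) / \<delta>, (complex_of_real \<alpha> * cnj x + cnj \<beta> * cnj y) / \<delta>)"
  by (simp add: companion_def perp_def Mvec_def)

lemma herm_form_companion_right: "herm_form \<alpha> \<beta> \<gamma> v (companion \<alpha> \<beta> \<gamma> \<delta> v) = 0"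
  by (cases v) (simp add: companion_Pair herm_form_def add_divide_distrib[symmetric] algebra_simps)

lemma herm_form_companion_left: "herm_form \<alpha> \<beta> \<gamma> (companion \<alpha> \<beta> \<gamma> \<delta> v) v = 0"
  by (cases v) (simp add: companion_Pair herm_form_def add_divide_distrib[symmetric] algebra_simps)

lemma herm_form_companion_companion:
  "herm_form \<alpha> \<beta> \<gamma> (companion \<alpha> \<beta> \<gamma> \<delta> v) (companion \<alpha> \<beta> \<gamma> \<delta> v) =
     complex_of_real (detM \<alpha> \<beta> \<gamma> / (cmod \<delta>)\<^sup>2) * Qform \<alpha> \<beta> \<gamma> v"
proof (cases "\<delta> = 0")
  case True then show ?thesis by (cases v) (simp add: companion_Pair herm_form_def)
next
  case False
  then show ?thesis
    by (cases v)
      (simp add: companion_Pair herm_form_def Qform_def detM_def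
         complex_norm_square[unfolded of_real_power] field_simps; algebra)
qed

lemma Qform_cross_term:
  "(complex_of_real \<alpha> * x + \<beta> * y) * cnj (cnj \<beta> * x + complex_of_real \<gamma> * y) =
     Qform \<alpha> \<beta> \<gamma> (x, y) * \<beta> + complex_of_real (detM \<alpha> \<beta> \<gamma>) * x * cnj y"
  by (simp add: Qform_def herm_form_def detM_def complex_norm_square[unfolded of_real_power] algebra_simps)

lemma Qform_norm_term:
  "(complex_of_real \<alpha> * x + \<beta> * y) * cnj (complex_of_real \<alpha> * x + \<beta> * y)
     + complex_of_real (detM \<alpha> \<beta> \<gamma>) * (y * cnj y) = complex_of_real \<alpha> * Qform \<alpha> \<beta> \<gamma> (x, y)"
  by (simp add: Qform_def herm_form_def detM_def complex_norm_square[unfolded of_real_power] algebra_simps)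

lemma (in cnj_field_closed) Fmap_mem_Lset:
  assumes "a \<in> (K \<times> K) \<times> (K \<times> K)"
  shows "Fmap \<epsilon> a \<in> Lset K \<epsilon> \<times> Lset K \<epsilon>"
  using assms unfolding Fmap_def Lset_def by (auto intro!: cnj_mem uminus_mem)

definition qconj :: "quat \<Rightarrow> quat" where
  "qconj u = (cnj (fst u), - snd u)"

lemma qmult_qconj_left:
  "qmult (qconj u) (qmult u v) = (complex_of_real (qnorm2 u) * fst v, complex_of_real (qnorm2 u) * snd v)"
  by (simp add: qmult_def qconj_def qnorm2_def complex_norm_square[unfolded of_real_power] algebra_simps)

lemma qmult_left_cancel:
  assumes "qnorm2 u \<noteq> 0" and "qmult u v = qmult u v'"
  shows "v = v'"
proof -
  have "(complex_of_real (qnorm2 u) * fst v, complex_of_real (qnorm2 u) * snd v)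
      = (complex_of_real (qnorm2 u) * fst v', complex_of_real (qnorm2 u) * snd v')"
    by (metis assms(2) qmult_qconj_left)
  then show ?thesis
    using assms(1) by (simp add: prod_eq_iff)
qed

lemma inj_Fmap:
  assumes "\<epsilon> > 0"
  shows "inj (Fmap \<epsilon>)"
proof (rule injI)
  fix a b :: "(complex \<times> complex) \<times> complex \<times> complex"
  assume "Fmap \<epsilon> a = Fmap \<epsilon> b"
  then show "a = b"
    using assms by (cases a, cases b) (auto simp: Fmap_def)
qed

lemma Fmap_companion_Pair:
  "Fmap \<epsilon> ((x, y), companion \<alpha> \<beta> \<gamma> \<delta> (x, y)) =
     (((complex_of_real \<alpha> * x + \<beta> * y) / cnj \<delta>, cnj y * complex_of_real (sqrt (real \<epsilon>))),
      (cnj (cnj \<beta> * x + complex_of_real \<gamma> * y) / \<delta>, cnj x * complex_of_real (sqrt (real \<epsilon>))))"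
  by (simp add: Fmap_def companion_Pair minus_divide_left)

lemma qmult_Fmap_companion:
  fixes v :: "complex \<times> complex"
  assumes "\<delta> \<noteq> 0" and det: "detM \<alpha> \<beta> \<gamma> = (cmod \<delta>)\<^sup>2 * real \<epsilon>"
  defines "c \<equiv> Qform \<alpha> \<beta> \<gamma> v / complex_of_real ((cmod \<delta>)\<^sup>2)"
  shows "qmult (fst (Fmap \<epsilon> (v, companion \<alpha> \<beta> \<gamma> \<delta> v))) (snd (Fmap \<epsilon> (v, companion \<alpha> \<beta> \<gamma> \<delta> v)))
           = (c * \<beta>, c * \<delta> * complex_of_real (sqrt (real \<epsilon>)))"
proof -
  obtain x y where v: "v = (x, y)" by fastforce
  define s where "s = complex_of_real (sqrt (real \<epsilon>))"
  define p where "p = complex_of_real \<alpha> * x + \<beta> * y"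
  define r where "r = cnj \<beta> * x + complex_of_real \<gamma> * y"
  have norm_delta: "complex_of_real ((cmod \<delta>)\<^sup>2) = \<delta> * cnj \<delta>"
    by (rule complex_norm_square)
  have detc: "complex_of_real (detM \<alpha> \<beta> \<gamma>) = \<delta> * cnj \<delta> * of_nat \<epsilon>"
    unfolding det of_real_mult norm_delta by simp
  have "p / cnj \<delta> * (cnj r / \<delta>) - cnj y * s * cnj (cnj x * s)
      = (p * cnj r - complex_of_real (detM \<alpha> \<beta> \<gamma>) * x * cnj y) / complex_of_real ((cmod \<delta>)\<^sup>2)"
    using \<open>\<delta> \<noteq> 0\<close> unfolding detc s_def norm_delta
    by (simp add: field_simps flip: of_real_mult)
  also have "\<dots> = c * \<beta>"
    unfolding c_def v p_def r_def Qform_cross_term by simp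
  finally have fst_eq: "p / cnj \<delta> * (cnj r / \<delta>) - cnj y * s * cnj (cnj x * s) = c * \<beta>" .
  have "p / cnj \<delta> * (cnj x * s) + cnj y * s * cnj (cnj r / \<delta>) = (cnj x * p + cnj y * r) * \<delta> / (\<delta> * cnj \<delta>) * s"
    using \<open>\<delta> \<noteq> 0\<close> by (simp add: field_simps)
  also have "\<dots> = c * \<delta> * s"
    unfolding c_def v p_def r_def norm_delta by (simp add: Qform_def herm_form_def)
  finally have snd_eq: "p / cnj \<delta> * (cnj x * s) + cnj y * s * cnj (cnj r / \<delta>) = c * \<delta> * s" .
  show ?thesis
    unfolding v Fmap_companion_Pair p_def[symmetric] r_def[symmetric] s_def[symmetric] qmult_def
    using fst_eq snd_eq by simp
qed

lemma qnorm2_fst_Fmap_companion: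
  assumes "\<delta> \<noteq> 0" and det: "detM \<alpha> \<beta> \<gamma> = (cmod \<delta>)\<^sup>2 * real \<epsilon>"
  shows "complex_of_real (qnorm2 (fst (Fmap \<epsilon> (v, companion \<alpha> \<beta> \<gamma> \<delta> v))))
           = complex_of_real \<alpha> * Qform \<alpha> \<beta> \<gamma> v / complex_of_real ((cmod \<delta>)\<^sup>2)"
proof -
  obtain x y where v: "v = (x, y)" by fastforce
  define p where "p = complex_of_real \<alpha> * x + \<beta> * y"
  have "complex_of_real (qnorm2 (fst (Fmap \<epsilon> (v, companion \<alpha> \<beta> \<gamma> \<delta> v))))
      = (p * cnj p + complex_of_real (detM \<alpha> \<beta> \<gamma>) * (y * cnj y)) / complex_of_real ((cmod \<delta>)\<^sup>2)"
    using \<open>\<delta> \<noteq> 0\<close> unfolding v Fmap_companion_Pair p_def[symmetric] qnorm2_def det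
    by (simp add: norm_mult norm_divide power_mult_distrib power_divide
        complex_norm_square[unfolded of_real_power] field_simps)
  then show ?thesis
    unfolding v p_def Qform_norm_term .
qed

locale type_delta_setting = cnj_field_closed K
  for K :: "complex set" +
  fixes \<alpha> :: real and \<beta> :: complex and \<gamma> :: real and \<delta> :: complex and \<epsilon> :: nat and \<Delta> :: real
  assumes entries_mem: "complex_of_real \<alpha> \<in> K" "\<beta> \<in> K" "complex_of_real \<gamma> \<in> K" "\<delta> \<in> K"
    and alpha_nonzero: "\<alpha> \<noteq> 0"
    and Delta_nonzero: "\<Delta> \<noteq> 0"
    and delta_norm: "(cmod \<delta>)\<^sup>2 = \<Delta>"
    and detM_eq: "detM \<alpha> \<beta> \<gamma> = \<Delta> * real \<epsilon>"
begin

definition representations :: "real \<Rightarrow> (complex \<times> complex) set" where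
  "representations lam = {v \<in> K \<times> K. Qform \<alpha> \<beta> \<gamma> v = complex_of_real lam}"

lemma delta_nonzero: "\<delta> \<noteq> 0"
  using Delta_nonzero delta_norm by auto

lemma companion_mem:
  assumes "v \<in> K \<times> K"
  shows "companion \<alpha> \<beta> \<gamma> \<delta> v \<in> K \<times> K"
  using assms entries_mem
  by (cases v) (auto simp: companion_Pair intro!: divide_mem diff_mem add_mem mult_mem uminus_mem cnj_mem)

lemma orthobalanced_companion_iff:
  "orthobalanced K \<alpha> \<beta> \<gamma> \<epsilon> lam v (companion \<alpha> \<beta> \<gamma> \<delta> v) \<longleftrightarrow> v \<in> representations lam"
proof
  assume "orthobalanced K \<alpha> \<beta> \<gamma> \<epsilon> lam v (companion \<alpha> \<beta> \<gamma> \<delta> v)"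
  then show "v \<in> representations lam"
    unfolding orthobalanced_def representations_def Qform_def by (simp add: mem_Times_iff)
next
  assume v: "v \<in> representations lam"
  then have "herm_form \<alpha> \<beta> \<gamma> (companion \<alpha> \<beta> \<gamma> \<delta> v) (companion \<alpha> \<beta> \<gamma> \<delta> v)
               = complex_of_real (lam * real \<epsilon>)"
    using Delta_nonzero by (simp add: herm_form_companion_companion delta_norm detM_eq representations_def)
  moreover have "companion \<alpha> \<beta> \<gamma> \<delta> v \<in> K \<times> K"
    using v by (simp add: companion_mem representations_def)
  ultimately show "orthobalanced K \<alpha> \<beta> \<gamma> \<epsilon> lam v (companion \<alpha> \<beta> \<gamma> \<delta> v)"
    using v unfolding orthobalanced_def representations_def Qform_def
    by (simp add: mem_Times_iff herm_form_companion_left herm_form_companion_right)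
qed

lemma mem_BQ_iff:
  "(a1, a2) \<in> BQ K \<alpha> \<beta> \<gamma> \<epsilon> \<delta> lam \<longleftrightarrow> a1 \<in> representations lam \<and> a2 = companion \<alpha> \<beta> \<gamma> \<delta> a1"
proof -
  have "(a1, a2) \<in> BQ K \<alpha> \<beta> \<gamma> \<epsilon> \<delta> lam \<longleftrightarrow>
          orthobalanced K \<alpha> \<beta> \<gamma> \<epsilon> lam a1 a2 \<and> a2 = companion \<alpha> \<beta> \<gamma> \<delta> a1"
    unfolding BQ_def companion_def by simp
  then show ?thesis
    using orthobalanced_companion_iff by blast
qed

lemma BQ_eq_image: "BQ K \<alpha> \<beta> \<gamma> \<epsilon> \<delta> lam = (\<lambda>v. (v, companion \<alpha> \<beta> \<gamma> \<delta> v)) ` representations lam"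
  by (auto simp: mem_BQ_iff)

lemma detM_eq_norm: "detM \<alpha> \<beta> \<gamma> = (cmod \<delta>)\<^sup>2 * real \<epsilon>"
  by (simp add: detM_eq delta_norm)

lemma Fmap_companion_mem_Fnu:
  assumes v: "v \<in> representations lam"
  shows "Fmap \<epsilon> (v, companion \<alpha> \<beta> \<gamma> \<delta> v) \<in>
           Fnu K \<epsilon> (\<alpha> * lam / \<Delta>)
             (complex_of_real (lam / \<Delta>) * \<beta>,
              complex_of_real (lam / \<Delta>) * \<delta> * complex_of_real (sqrt (real \<epsilon>)))"
proof -
  define G where "G = Fmap \<epsilon> (v, companion \<alpha> \<beta> \<gamma> \<delta> v)"
  have Q: "Qform \<alpha> \<beta> \<gamma> v = complex_of_real lam"
    using v by (simp add: representations_def)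
  have "G \<in> Lset K \<epsilon> \<times> Lset K \<epsilon>"
    using v companion_mem[of v] unfolding G_def representations_def by (simp add: Fmap_mem_Lset)
  moreover have "qmult (fst G) (snd G) =
      (complex_of_real (lam / \<Delta>) * \<beta>, complex_of_real (lam / \<Delta>) * \<delta> * complex_of_real (sqrt (real \<epsilon>)))"
    unfolding G_def qmult_Fmap_companion[OF delta_nonzero detM_eq_norm] Q delta_norm by simp
  moreover have "qnorm2 (fst G) = \<alpha> * lam / \<Delta>"
    using qnorm2_fst_Fmap_companion[OF delta_nonzero detM_eq_norm, of v]
    unfolding G_def[symmetric] Q delta_norm by (metis of_real_divide of_real_eq_iff of_real_mult)
  ultimately show ?thesis
    unfolding G_def[symmetric] Fnu_def by (auto simp: case_prod_beta)
qed

lemma Fnu_subset_image: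
  assumes "lam \<noteq> 0"
  shows "Fnu K \<epsilon> (\<alpha> * lam / \<Delta>)
           (complex_of_real (lam / \<Delta>) * \<beta>,
            complex_of_real (lam / \<Delta>) * \<delta> * complex_of_real (sqrt (real \<epsilon>)))
         \<subseteq> (\<lambda>v. Fmap \<epsilon> (v, companion \<alpha> \<beta> \<gamma> \<delta> v)) ` representations lam"
    (is "Fnu K \<epsilon> ?\<nu> ?t \<subseteq> ?G ` _")
proof
  fix q assume "q \<in> Fnu K \<epsilon> ?\<nu> ?t"
  then obtain u w where q: "q = (u, w)" and "u \<in> Lset K \<epsilon>"
    and t: "?t = qmult u w" and norm: "qnorm2 u = ?\<nu>"
    unfolding Fnu_def by blast
  then obtain r s where u: "u = (r, s * complex_of_real (sqrt (real \<epsilon>)))" and "r \<in> K" "s \<in> K"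
    unfolding Lset_def by blast
  \<comment> \<open>solves \<open>(\<alpha> x + \<beta> y) / cnj \<delta> = r\<close>, \<open>cnj y = s\<close>, i.e. the first quaternion of the image is \<open>u\<close>\<close>
  define v where "v = ((cnj \<delta> * r - \<beta> * cnj s) / complex_of_real \<alpha>, cnj s)"
  have vK: "v \<in> K \<times> K"
    unfolding v_def using \<open>r \<in> K\<close> \<open>s \<in> K\<close> entries_mem
    by (auto intro!: divide_mem diff_mem mult_mem cnj_mem)
  have fst_G: "fst (?G v) = u"
    unfolding v_def u Fmap_companion_Pair using alpha_nonzero delta_nonzero by simp
  have "complex_of_real ?\<nu> = complex_of_real \<alpha> * Qform \<alpha> \<beta> \<gamma> v / complex_of_real \<Delta>"
    using qnorm2_fst_Fmap_companion[OF delta_nonzero detM_eq_norm, of v]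
    unfolding fst_G norm delta_norm .
  then have "Qform \<alpha> \<beta> \<gamma> v = complex_of_real lam"
    using alpha_nonzero Delta_nonzero by (simp add: field_simps)
  then have v: "v \<in> representations lam"
    using vK by (simp add: representations_def)
  then have "?t = qmult u (snd (?G v))"
    using Fmap_companion_mem_Fnu[OF v] fst_G unfolding Fnu_def by (auto simp: case_prod_beta)
  moreover have "qnorm2 u \<noteq> 0"
    using norm alpha_nonzero Delta_nonzero assms by simp
  ultimately have "w = snd (?G v)"
    using t qmult_left_cancel by metis
  then have "q = ?G v"
    using q fst_G by (simp add: prod_eq_iff)
  then show "q \<in> ?G ` representations lam"
    using v by blast
qed

end

theorem mainTheorem10:
  fixes K :: "complex set" and \<alpha> \<gamma> :: real and \<beta> :: complex
    and \<Delta> :: real and \<epsilon> :: nat and lam :: real and \<delta> :: complex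
  assumes K: "Q_or_imag_quad K"
    and M_entries: "complex_of_real \<alpha> \<in> K" "\<beta> \<in> K" "complex_of_real \<gamma> \<in> K"
    and M_posdef: "pos_def \<alpha> \<beta> \<gamma>"
    and Delta: "\<Delta> \<in> \<rat>" "abs_square K \<Delta>"
    and eps: "\<epsilon> > 0" "\<forall>n::nat. n > 0 \<and> n dvd \<epsilon> \<and> abs_square K (real n) \<longrightarrow> n = 1"
    and mu: "detM \<alpha> \<beta> \<gamma> = \<Delta> * real \<epsilon>"
    and lambda: "lam \<in> \<rat>" "lam > 0"
    and delta: "\<delta> \<in> K" "(cmod \<delta>)^2 = \<Delta>"
  shows "bij_betw (Fmap \<epsilon>) (BQ K \<alpha> \<beta> \<gamma> \<epsilon> \<delta> lam)
           (Fnu K \<epsilon> (\<alpha> * lam / \<Delta>)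
              (complex_of_real (lam / \<Delta>) * \<beta>,
               complex_of_real (lam / \<Delta>) * \<delta> * complex_of_real (sqrt (real \<epsilon>))))"
proof -
  have "\<alpha> \<noteq> 0"
    using pos_def_alpha_pos[OF M_posdef] by simp
  moreover have "\<Delta> \<noteq> 0"
    using pos_def_detM_pos[OF M_posdef] mu by auto
  ultimately interpret type_delta_setting K \<alpha> \<beta> \<gamma> \<delta> \<epsilon> \<Delta>
    using Q_or_imag_quad_cnj_field_closed[OF K] M_entries delta mu
    by (simp add: type_delta_setting_def type_delta_setting_axioms_def)
  have "Fmap \<epsilon> ` BQ K \<alpha> \<beta> \<gamma> \<epsilon> \<delta> lam =
          Fnu K \<epsilon> (\<alpha> * lam / \<Delta>)
            (complex_of_real (lam / \<Delta>) * \<beta>,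
             complex_of_real (lam / \<Delta>) * \<delta> * complex_of_real (sqrt (real \<epsilon>)))"
    using Fmap_companion_mem_Fnu Fnu_subset_image lambda(2)
    unfolding BQ_eq_image image_image by (intro equalityI) auto
  then show ?thesis
    using inj_on_subset[OF inj_Fmap[OF eps(1)] subset_UNIV] unfolding bij_betw_def by blast
qed

end
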